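(* Let $n\ge2$ and consider the parallel network with unit demand and latencies $\ell_i(x_i)=x_i$ for $i=1,\dots,n-1$ and constant latency $\ell_n(x_n)=\frac{1}{2(n-1)}$. Then for every $c\in\mathbb{R}_+\cup\{\infty\}$ and every $t\in\mathcal{T}(c)$, the induced flow is $x(t)=\left(\frac{1}{2(n-1)},\dots,\frac{1}{2(n-1)},\frac12\right)=x(0)$, while the optimal flow is $x^*=\left(\frac{1}{4(n-1)},\dots,\frac{1}{4(n-1)},\frac34\right)$. Consequently every price cap is optimal and $$\min_{c}\ \frac{C(x(c))}{C(x^* )}=\frac87 .$$
   Context: Flows $x\in\mathbb{R}^n_+$ with $\sum_ix_i=1$; $C(x)=\sum_i\ell_i(x_i)x_i$; $x^*$ minimizes $C$. For tolls $t\in\mathbb{R}^n_+$, $x(t)$ is the unique Wardrop equilibrium for $t$ (for all $i,j$ with $x_i>0$: $\ell_i(x_i)+t_i\le\ell_j(x_j)+t_j$); $x(0)$ is the untolled one. Profit $\Pi_i(t)=t_ix_i(t)$. For $c\in\mathbb{R}_+$, $\mathcal{T}(c)$ is the set of toll vectors with $0\le t_i\le c$ such that for every $i$ and every $t'_i\in[0,c]$, $\Pi_i(t_i,t_{-i})\ge\Pi_i(t'_i,t_{-i})$ (flow recomputed); $\mathcal{T}(\infty)$ is the same without upper bound. $x(c)$ denotes the flow induced by the $c$-capped equilibrium. *)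

theory Defs
  imports "HOL-Analysis.Analysis" "HOL-Library.Extended_Real"
begin

text \<open>Parallel network with links indexed 0,...,n-1; flows and tolls are
  functions nat => real that vanish outside {..<n}.  lat i y is the latency
  of link i at flow y.\<close>

definition feasible :: "nat \<Rightarrow> (nat \<Rightarrow> real) \<Rightarrow> bool" where
  "feasible n x \<longleftrightarrow> (\<forall>i<n. 0 \<le> x i) \<and> (\<forall>i\<ge>n. x i = 0) \<and> (\<Sum>i<n. x i) = 1"

definition cost :: "nat \<Rightarrow> (nat \<Rightarrow> real \<Rightarrow> real) \<Rightarrow> (nat \<Rightarrow> real) \<Rightarrow> real" where
  "cost n lat x = (\<Sum>i<n. lat i (x i) * x i)"

definition optimal :: "nat \<Rightarrow> (nat \<Rightarrow> real \<Rightarrow> real) \<Rightarrow> (nat \<Rightarrow> real) \<Rightarrow> bool" where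
  "optimal n lat x \<longleftrightarrow> feasible n x \<and> (\<forall>y. feasible n y \<longrightarrow> cost n lat x \<le> cost n lat y)"

definition wardrop :: "nat \<Rightarrow> (nat \<Rightarrow> real \<Rightarrow> real) \<Rightarrow> (nat \<Rightarrow> real) \<Rightarrow> (nat \<Rightarrow> real) \<Rightarrow> bool" where
  "wardrop n lat t x \<longleftrightarrow> feasible n x \<and>
     (\<forall>i<n. \<forall>j<n. 0 < x i \<longrightarrow> lat i (x i) + t i \<le> lat j (x j) + t j)"

text \<open>x(t): the (unique) Wardrop equilibrium under tolls t.\<close>
definition eqflow :: "nat \<Rightarrow> (nat \<Rightarrow> real \<Rightarrow> real) \<Rightarrow> (nat \<Rightarrow> real) \<Rightarrow> (nat \<Rightarrow> real)" where
  "eqflow n lat t = (THE x. wardrop n lat t x)"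

definition profit :: "nat \<Rightarrow> (nat \<Rightarrow> real \<Rightarrow> real) \<Rightarrow> nat \<Rightarrow> (nat \<Rightarrow> real) \<Rightarrow> real" where
  "profit n lat i t = t i * eqflow n lat t i"

text \<open>T(c) for c in [0,\<infinity>] (c = \<infinity> means no cap).\<close>
definition toll_eq :: "nat \<Rightarrow> (nat \<Rightarrow> real \<Rightarrow> real) \<Rightarrow> ereal \<Rightarrow> (nat \<Rightarrow> real) set" where
  "toll_eq n lat c = {t. (\<forall>i<n. 0 \<le> t i \<and> ereal (t i) \<le> c) \<and> (\<forall>i\<ge>n. t i = 0) \<and>
     (\<forall>i<n. \<forall>t'. 0 \<le> t' \<and> ereal t' \<le> c \<longrightarrow> profit n lat i t \<ge> profit n lat i (t(i := t')))}"

definition ex_lat :: "nat \<Rightarrow> nat \<Rightarrow> real \<Rightarrow> real" where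
  "ex_lat n i y = (if i < n - 1 then y else 1 / (2 * (real n - 1)))"

end

theory Submission
  imports Defs
begin

text \<open>For fixed tolls the Wardrop equilibrium is unique by monotonicity of the latencies and is
  obtained by water filling. In a toll equilibrium with a positive cap every link carries flow,
  because an unused link could earn a positive profit with a small toll. All linear links then
  share the cost level \<open>\<alpha> + t m\<close>, so the owner of a linear link \<open>i\<close> faces the demand
  \<open>\<alpha> + t m - t i\<close> and, once the linear tolls are known to agree on a value \<open>\<tau>\<close>, the owner of
  the constant link faces the demand \<open>m (\<alpha> + \<tau> - t m)\<close>. Maximising these quadratic profits
  forces every toll to be half of \<open>\<alpha>\<close> plus the competing toll, or the cap; either way all
  tolls coincide, and uniform tolls induce the untolled flow. Its cost \<open>\<alpha>\<close> against the
  optimal cost \<open>7 \<alpha> / 8\<close> gives the ratio \<open>8 / 7\<close>.\<close>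

section \<open>Wardrop equilibria\<close>

lemma feasible_Suc_iff:
  "feasible (Suc m) x \<longleftrightarrow> (\<forall>i\<le>m. 0 \<le> x i) \<and> (\<forall>i>m. x i = 0) \<and> (\<Sum>i<m. x i) + x m = 1"
  by (auto simp: feasible_def less_Suc_eq_le Suc_le_eq)

lemma wardrop_variational_inequality:
  assumes w: "wardrop n lat s x" and y: "feasible n y"
  shows "(\<Sum>i<n. (lat i (x i) + s i) * x i) \<le> (\<Sum>i<n. (lat i (x i) + s i) * y i)"
proof -
  define C where "C i = lat i (x i) + s i" for i
  have x: "feasible n x" using w by (simp add: wardrop_def)
  then have "(\<Sum>i<n. x i) \<noteq> 0" by (simp add: feasible_def)
  then obtain k where k: "k < n" "0 < x k"
    using x by (metis feasible_def le_less lessThan_iff sum.neutral)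
  have C_min: "C k \<le> C j" if "j < n" for j
    using w k that by (simp add: wardrop_def C_def)
  have C_used: "C i * x i = C k * x i" if "i < n" for i
  proof (cases "x i = 0")
    case False
    then have "0 < x i" using x that by (simp add: feasible_def less_le)
    then have "C i \<le> C k" using w k that by (simp add: wardrop_def C_def)
    then show ?thesis using C_min[OF that] by simp
  qed simp
  have "(\<Sum>i<n. C i * x i) = C k"
    using x by (simp add: C_used sum_distrib_left[symmetric] feasible_def)
  also have "\<dots> = (\<Sum>i<n. C k * y i)"
    using y by (simp add: sum_distrib_left[symmetric] feasible_def)
  also have "\<dots> \<le> (\<Sum>i<n. C i * y i)"
    using y C_min by (intro sum_mono mult_right_mono) (auto simp: feasible_def)
  finally show ?thesis by (simp add: C_def)
qed

lemma wardrop_monotone: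
  assumes "wardrop n lat s x" and "wardrop n lat s y"
  shows "(\<Sum>i<n. (lat i (x i) - lat i (y i)) * (x i - y i)) \<le> 0"
proof -
  have "(\<Sum>i<n. (lat i (x i) - lat i (y i)) * (x i - y i))
      = ((\<Sum>i<n. (lat i (x i) + s i) * x i) - (\<Sum>i<n. (lat i (x i) + s i) * y i))
      + ((\<Sum>i<n. (lat i (y i) + s i) * y i) - (\<Sum>i<n. (lat i (y i) + s i) * x i))"
    by (simp add: sum_subtractf[symmetric] sum.distrib[symmetric] algebra_simps)
  also have "\<dots> \<le> 0"
    using wardrop_variational_inequality[OF assms(1), of y]
      wardrop_variational_inequality[OF assms(2), of x] assms
    by (simp add: wardrop_def)
  finally show ?thesis .
qed

lemma wardrop_raise_unused_toll:
  assumes "wardrop n lat s x" and "x i = 0" and "s i \<le> u"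
  shows "wardrop n lat (s(i := u)) x"
  unfolding wardrop_def
proof (intro conjI allI impI)
  show "feasible n x" using assms(1) by (simp add: wardrop_def)
  fix j k assume "j < n" "k < n" "0 < x j"
  then have "lat j (x j) + s j \<le> lat k (x k) + s k"
    using assms(1) by (simp add: wardrop_def)
  moreover have "j \<noteq> i" and "s k \<le> (s(i := u)) k"
    using \<open>0 < x j\<close> assms(2,3) by auto
  ultimately show "lat j (x j) + (s(i := u)) j \<le> lat k (x k) + (s(i := u)) k"
    by simp
qed

lemma ereal_exists_increment:
  assumes "ereal u < c" and "0 < d"
  shows "\<exists>\<eta>>0. \<eta> \<le> d \<and> ereal (u + \<eta>) \<le> c"
proof (cases c)
  case (real r)
  then show ?thesis using assms by (intro exI[of _ "min d (r - u)"]) auto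
qed (use assms in auto)

text \<open>A small move of \<open>t\<close> towards \<open>K / 2\<close> raises the profit \<open>u (K - u)\<close> unless the cap
  blocks it.\<close>

lemma capped_quadratic_best_response:
  fixes K t \<delta> :: real and c :: ereal
  assumes "0 < \<delta>" "0 \<le> K" "0 \<le> t" "ereal t \<le> c"
    and no_better: "\<And>u. 0 \<le> u \<Longrightarrow> ereal u \<le> c \<Longrightarrow> \<bar>u - t\<bar> \<le> \<delta> \<Longrightarrow> u * (K - u) \<le> t * (K - t)"
  shows "2 * t \<le> K \<and> (2 * t = K \<or> ereal t = c)"
proof
  show le: "2 * t \<le> K"
  proof (rule ccontr)
    assume "\<not> 2 * t \<le> K"
    define \<eta> where "\<eta> = min \<delta> ((2 * t - K) / 2)"
    have \<eta>: "0 < \<eta>" "\<eta> \<le> t" "\<eta> \<le> \<delta>" "\<eta> \<le> (2 * t - K) / 2"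
      using \<open>\<not> 2 * t \<le> K\<close> assms(1,2) unfolding \<eta>_def by (auto simp: min_def)
    have "ereal (t - \<eta>) \<le> c"
      using \<eta>(1) assms(4) order_trans[of "ereal (t - \<eta>)" "ereal t" c] by simp
    then have "(t - \<eta>) * (K - (t - \<eta>)) \<le> t * (K - t)"
      using \<eta> by (intro no_better) auto
    moreover have "0 < \<eta> * (2 * t - K - \<eta>)" using \<eta> by (intro mult_pos_pos) auto
    ultimately show False by (simp add: algebra_simps)
  qed
  show "2 * t = K \<or> ereal t = c"
  proof (rule ccontr)
    assume "\<not> ?thesis"
    then have "2 * t < K" "ereal t < c" using le assms(4) by auto
    then obtain \<eta> where \<eta>: "0 < \<eta>" "\<eta> \<le> min \<delta> ((K - 2 * t) / 2)" "ereal (t + \<eta>) \<le> c"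
      using ereal_exists_increment[of t c "min \<delta> ((K - 2 * t) / 2)"] assms(1) by auto
    then have "(t + \<eta>) * (K - (t + \<eta>)) \<le> t * (K - t)"
      using assms(3) by (intro no_better) auto
    moreover have "0 < \<eta> * (K - 2 * t - \<eta>)" using \<eta> \<open>2 * t < K\<close> by (intro mult_pos_pos) auto
    ultimately show False by (simp add: algebra_simps)
  qed
qed

section \<open>The example network\<close>

text \<open>Links \<open>0, \<dots>, m - 1\<close> are the linear links and link \<open>m\<close> is the constant one, so
  \<open>m = n - 1\<close>.\<close>

locale pigou_network =
  fixes m :: nat
  assumes linear_links_exist: "1 \<le> m"
begin

definition \<alpha> :: real where "\<alpha> = 1 / (2 * real m)"

abbreviation lat :: "nat \<Rightarrow> real \<Rightarrow> real" where "lat \<equiv> ex_lat (Suc m)"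

abbreviation flow :: "(nat \<Rightarrow> real) \<Rightarrow> nat \<Rightarrow> real" where "flow s \<equiv> eqflow (Suc m) lat s"

lemma lat_eq [simp]: "lat i y = (if i < m then y else \<alpha>)"
  by (simp add: ex_lat_def \<alpha>_def)

lemma alpha_pos: "0 < \<alpha>"
  using linear_links_exist by (simp add: \<alpha>_def)

lemma m_mult_alpha: "real m * \<alpha> = 1 / 2"
  using linear_links_exist by (simp add: \<alpha>_def)

lemma wardrop_unique:
  assumes "wardrop (Suc m) lat s x" and "wardrop (Suc m) lat s y"
  shows "x = y"
proof -
  have "(\<Sum>i<m. (x i - y i)^2) \<le> 0"
    using wardrop_monotone[OF assms] by (simp add: power2_eq_square)
  then have "(\<Sum>i<m. (x i - y i)^2) = 0"
    by (meson antisym sum_nonneg zero_le_power2)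
  then have linear: "\<forall>i<m. x i = y i"
    by (simp add: sum_nonneg_eq_0_iff)
  moreover have "x m = y m"
    using assms linear by (simp add: wardrop_def feasible_Suc_iff)
  ultimately show ?thesis
    using assms by (auto simp: wardrop_def feasible_Suc_iff intro!: ext) (metis linorder_neqE_nat)
qed

definition linear_demand :: "(nat \<Rightarrow> real) \<Rightarrow> real \<Rightarrow> real" where
  "linear_demand s L = (\<Sum>i<m. max 0 (L - s i))"

text \<open>Water filling up to the cost level \<open>L\<close>.\<close>

definition level_flow :: "(nat \<Rightarrow> real) \<Rightarrow> real \<Rightarrow> nat \<Rightarrow> real" where
  "level_flow s L i =
     (if i < m then max 0 (L - s i) else if i = m then 1 - linear_demand s L else 0)"

lemma wardrop_level_flow:
  assumes "L \<le> \<alpha> + s m" and "linear_demand s L \<le> 1"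
    and "L = \<alpha> + s m \<or> linear_demand s L = 1"
  shows "wardrop (Suc m) lat s (level_flow s L)"
  unfolding wardrop_def feasible_Suc_iff
proof (intro conjI allI impI)
  fix i j assume "i < Suc m" "j < Suc m" "0 < level_flow s L i"
  then have "lat i (level_flow s L i) + s i = L"
    using assms by (auto simp: level_flow_def less_Suc_eq split: if_splits)
  moreover have "L \<le> lat j (level_flow s L j) + s j"
    using assms \<open>j < Suc m\<close> by (auto simp: level_flow_def less_Suc_eq)
  ultimately show "lat i (level_flow s L i) + s i \<le> lat j (level_flow s L j) + s j"
    by simp
qed (use assms in \<open>auto simp: level_flow_def linear_demand_def\<close>)

lemma water_level_exists:
  "\<exists>L. L \<le> \<alpha> + s m \<and> linear_demand s L \<le> 1 \<and> (L = \<alpha> + s m \<or> linear_demand s L = 1)"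
proof (cases "linear_demand s (\<alpha> + s m) \<le> 1")
  case False
  define L0 where "L0 = min (\<alpha> + s m) (- (\<Sum>i<m. \<bar>s i\<bar>))"
  have "L0 \<le> s i" if "i < m" for i
    using member_le_sum[of i "{..<m}" "\<lambda>i. \<bar>s i\<bar>"] that unfolding L0_def by auto
  then have "linear_demand s L0 = 0"
    unfolding linear_demand_def by (intro sum.neutral) auto
  moreover have "\<forall>L. L0 \<le> L \<and> L \<le> \<alpha> + s m \<longrightarrow> isCont (linear_demand s) L"
    unfolding linear_demand_def by (intro allI impI continuous_intros)
  ultimately obtain L where "L0 \<le> L" "L \<le> \<alpha> + s m" "linear_demand s L = 1"
    using IVT[of "linear_demand s" L0 1 "\<alpha> + s m"] False by (force simp: L0_def)
  then show ?thesis by auto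
qed auto

lemma wardrop_flow: "wardrop (Suc m) lat s (flow s)"
proof -
  obtain x where "wardrop (Suc m) lat s x"
    using water_level_exists wardrop_level_flow by blast
  then have "\<exists>!x. wardrop (Suc m) lat s x"
    using wardrop_unique by blast
  then show ?thesis
    unfolding eqflow_def by (rule theI')
qed

lemma flow_nonneg: "i < Suc m \<Longrightarrow> 0 \<le> flow s i"
  using wardrop_flow[of s] by (simp add: wardrop_def feasible_def)

lemma wardrop_flowD:
  "i < Suc m \<Longrightarrow> j < Suc m \<Longrightarrow> 0 < flow s i \<Longrightarrow>
    lat i (flow s i) + s i \<le> lat j (flow s j) + s j"
  using wardrop_flow[of s] by (simp add: wardrop_def)

lemma flow_eqI: "wardrop (Suc m) lat s x \<Longrightarrow> flow s = x"
  using wardrop_flow wardrop_unique by blast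

lemma flow_top_level:
  "linear_demand s (\<alpha> + s m) \<le> 1 \<Longrightarrow> flow s = level_flow s (\<alpha> + s m)"
  by (simp add: flow_eqI wardrop_level_flow)

definition uniform_toll_flow :: "nat \<Rightarrow> real" where
  "uniform_toll_flow i = (if i < m then \<alpha> else if i = m then 1 / 2 else 0)"

definition optimal_flow :: "nat \<Rightarrow> real" where
  "optimal_flow i = (if i < m then \<alpha> / 2 else if i = m then 3 / 4 else 0)"

lemma flow_uniform_toll:
  assumes "\<forall>i<Suc m. s i = \<tau>"
  shows "flow s = uniform_toll_flow"
proof -
  have "linear_demand s (\<alpha> + s m) = 1 / 2"
    using assms alpha_pos m_mult_alpha by (simp add: linear_demand_def)
  then show ?thesis
    using assms alpha_pos flow_top_level by (auto simp: level_flow_def uniform_toll_flow_def)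
qed

lemma flow_constant_link:
  assumes "\<forall>k<m. s k = \<tau>" and "\<tau> - \<alpha> \<le> s m" and "s m \<le> \<alpha> + \<tau>"
  shows "flow s m = real m * (\<alpha> + \<tau> - s m)"
proof -
  have "linear_demand s (\<alpha> + s m) = (\<Sum>k<m. \<alpha> + s m - \<tau>)"
    unfolding linear_demand_def using assms(1,2) by (intro sum.cong) auto
  then have demand: "linear_demand s (\<alpha> + s m) = real m * (\<alpha> + s m - \<tau>)"
    by simp
  also have "\<dots> \<le> real m * (2 * \<alpha>)"
    using assms(3) by (intro mult_left_mono) auto
  finally have "flow s = level_flow s (\<alpha> + s m)"
    using m_mult_alpha by (intro flow_top_level) simp
  then show ?thesis
    using demand m_mult_alpha by (simp add: level_flow_def algebra_simps)
qed

lemma cost_eq: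
  assumes "feasible (Suc m) y"
  shows "cost (Suc m) lat y = (\<Sum>i<m. (y i - \<alpha> / 2)^2) + 7 / 8 * \<alpha>"
proof -
  have squares: "(\<Sum>i<m. (y i - \<alpha> / 2)^2) = (\<Sum>i<m. y i * y i) - \<alpha> * (\<Sum>i<m. y i) + \<alpha> / 8"
    using m_mult_alpha
    by (simp add: power2_eq_square algebra_simps sum.distrib sum_subtractf sum_distrib_left)
  have "y m = 1 - (\<Sum>i<m. y i)"
    using assms by (simp add: feasible_Suc_iff)
  then have "\<alpha> * y m = \<alpha> - \<alpha> * (\<Sum>i<m. y i)"
    by (simp add: right_diff_distrib)
  then show ?thesis
    using squares by (simp add: cost_def)
qed

lemma cost_uniform_toll_flow: "cost (Suc m) lat uniform_toll_flow = \<alpha>"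
proof -
  have "real m * (\<alpha> * \<alpha>) = \<alpha> / 2"
    using m_mult_alpha by (simp flip: mult.assoc)
  have "cost (Suc m) lat uniform_toll_flow = real m * (\<alpha> * \<alpha>) / 4 + 7 / 8 * \<alpha>"
    using cost_eq[of uniform_toll_flow] alpha_pos m_mult_alpha
    by (simp add: feasible_Suc_iff uniform_toll_flow_def power2_eq_square)
  also have "\<dots> = \<alpha>"
    unfolding \<open>real m * (\<alpha> * \<alpha>) = \<alpha> / 2\<close> by simp
  finally show ?thesis .
qed

lemma feasible_optimal_flow: "feasible (Suc m) optimal_flow"
  using alpha_pos m_mult_alpha by (simp add: feasible_Suc_iff optimal_flow_def)

lemma cost_optimal_flow: "cost (Suc m) lat optimal_flow = 7 / 8 * \<alpha>"
  using cost_eq[OF feasible_optimal_flow] by (simp add: optimal_flow_def)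

lemma optimal_iff: "optimal (Suc m) lat y \<longleftrightarrow> y = optimal_flow"
proof
  assume "optimal (Suc m) lat y"
  then have "feasible (Suc m) y" and "cost (Suc m) lat y \<le> 7 / 8 * \<alpha>"
    using feasible_optimal_flow cost_optimal_flow by (auto simp: optimal_def)
  then have "(\<Sum>i<m. (y i - \<alpha> / 2)^2) = 0"
    using cost_eq by (simp add: antisym sum_nonneg)
  then have linear: "\<forall>i<m. y i = \<alpha> / 2"
    by (simp add: sum_nonneg_eq_0_iff)
  have "(\<Sum>i<m. y i) = (\<Sum>i<m. \<alpha> / 2)"
    using linear by (intro sum.cong) auto
  then have "(\<Sum>i<m. y i) = 1 / 4"
    using m_mult_alpha by simp
  then have "y m = 3 / 4"
    using \<open>feasible (Suc m) y\<close> by (simp add: feasible_Suc_iff)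
  then show "y = optimal_flow"
    using linear \<open>feasible (Suc m) y\<close> by (auto simp: feasible_Suc_iff optimal_flow_def intro!: ext)
next
  assume "y = optimal_flow"
  then show "optimal (Suc m) lat y"
    using feasible_optimal_flow cost_optimal_flow cost_eq by (simp add: optimal_def sum_nonneg)
qed

end

section \<open>Toll equilibria\<close>

locale pigou_toll_equilibrium = pigou_network +
  fixes c :: ereal and t :: "nat \<Rightarrow> real"
  assumes toll_equilibrium: "t \<in> toll_eq (Suc m) lat c"
    and cap_pos: "0 < c"
begin

lemma toll_nonneg: "i < Suc m \<Longrightarrow> 0 \<le> t i"
  and toll_le_cap: "i < Suc m \<Longrightarrow> ereal (t i) \<le> c"
  using toll_equilibrium by (auto simp: toll_eq_def)

lemma no_profitable_deviation:
  "i < Suc m \<Longrightarrow> 0 \<le> u \<Longrightarrow> ereal u \<le> c \<Longrightarrow> u * flow (t(i := u)) i \<le> t i * flow t i"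
  using toll_equilibrium by (auto simp: toll_eq_def profit_def)

lemma small_toll_exists: "\<exists>\<epsilon>>0. \<epsilon> < \<alpha> \<and> ereal \<epsilon> \<le> c"
  using ereal_exists_increment[of 0 c "\<alpha> / 2"] cap_pos alpha_pos
  by (auto simp: zero_ereal_def)

text \<open>If link \<open>m\<close> carried no flow, a small toll \<open>\<epsilon> < \<alpha>\<close> on it would attract flow: the
  linear links alone cannot absorb the demand at cost level \<open>\<alpha> + \<epsilon> < 2 \<alpha> = 1 / m\<close>.\<close>

lemma constant_link_used: "0 < flow t m"
proof (rule ccontr)
  assume "\<not> 0 < flow t m"
  then have unused: "flow t m = 0" using flow_nonneg[of m t] by simp
  obtain \<epsilon> where \<epsilon>: "0 < \<epsilon>" "\<epsilon> < \<alpha>" "ereal \<epsilon> \<le> c" using small_toll_exists by blast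
  define s where "s = t(m := \<epsilon>)"
  have "0 < flow s m"
  proof (rule ccontr)
    assume "\<not> 0 < flow s m"
    then have "flow s m = 0" using flow_nonneg[of m s] by simp
    then have "(\<Sum>j<m. flow s j) = 1"
      using wardrop_flow[of s] by (simp add: wardrop_def feasible_Suc_iff)
    moreover have "flow s j \<le> \<alpha> + \<epsilon>" if "j < m" for j
    proof (cases "flow s j = 0")
      case False
      then have "0 < flow s j" using flow_nonneg[of j s] that by simp
      then show ?thesis
        using wardrop_flowD[of j m s] toll_nonneg[of j] that by (simp add: s_def)
    qed (use \<epsilon> alpha_pos in simp)
    then have "(\<Sum>j<m. flow s j) \<le> real m * (\<alpha> + \<epsilon>)"
      using sum_bounded_above[of "{..<m}" "flow s"] by simp
    moreover have "real m * \<epsilon> < real m * \<alpha>"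
      using \<epsilon> linear_links_exist by simp
    ultimately show False
      using m_mult_alpha by (simp add: distrib_left)
  qed
  then have "0 < \<epsilon> * flow s m" using \<epsilon> by simp
  also have "\<dots> \<le> t m * flow t m"
    using no_profitable_deviation[of m \<epsilon>] \<epsilon> by (simp add: s_def)
  finally show False using unused by simp
qed

text \<open>An unused linear link \<open>i\<close> must have \<open>t i \<ge> \<alpha> + t m\<close>. Lowering its toll to \<open>\<epsilon>\<close>
  attracts flow: otherwise the new equilibrium would also be one for \<open>t\<close>, in which
  link \<open>m\<close> is used, forcing \<open>\<alpha> + t m \<le> \<epsilon>\<close>.\<close>

lemma linear_link_used:
  assumes "i < m"
  shows "0 < flow t i"
proof (rule ccontr)
  assume "\<not> 0 < flow t i"
  then have unused: "flow t i = 0" using flow_nonneg[of i t] assms by simp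
  have "\<alpha> + t m \<le> t i"
    using wardrop_flowD[of m i t] constant_link_used assms unused by simp
  obtain \<epsilon> where \<epsilon>: "0 < \<epsilon>" "\<epsilon> < \<alpha>" "ereal \<epsilon> \<le> c" using small_toll_exists by blast
  define s where "s = t(i := \<epsilon>)"
  have "0 < flow s i"
  proof (rule ccontr)
    assume "\<not> 0 < flow s i"
    then have "flow s i = 0" using flow_nonneg[of i s] assms by simp
    moreover have "s(i := t i) = t" by (simp add: s_def)
    ultimately have "wardrop (Suc m) lat t (flow s)"
      using wardrop_raise_unused_toll[OF wardrop_flow, of s i "t i"] \<open>\<alpha> + t m \<le> t i\<close> \<epsilon>
        toll_nonneg[of m]
      by (simp add: s_def)
    then have "flow s = flow t" by (simp add: flow_eqI)
    then have "\<alpha> + t m \<le> \<epsilon>"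
      using wardrop_flowD[of m i s] constant_link_used assms \<open>flow s i = 0\<close> by (simp add: s_def)
    then show False using \<epsilon> toll_nonneg[of m] by simp
  qed
  then have "0 < \<epsilon> * flow s i" using \<epsilon> by simp
  also have "\<dots> \<le> t i * flow t i"
    using no_profitable_deviation[of i \<epsilon>] \<epsilon> assms by (simp add: s_def)
  finally show False using unused by simp
qed

lemma linear_flow: "i < m \<Longrightarrow> flow t i = \<alpha> + t m - t i"
  using wardrop_flowD[of i m t] wardrop_flowD[of m i t] linear_link_used constant_link_used
  by fastforce

lemma linear_toll_response:
  assumes i: "i < m"
  shows "2 * t i \<le> \<alpha> + t m \<and> (2 * t i = \<alpha> + t m \<or> ereal (t i) = c)"
proof (rule capped_quadratic_best_response)
  show "0 < min (flow t i) (flow t m)"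
    using linear_link_used[OF i] constant_link_used by simp
  show "0 \<le> \<alpha> + t m" "0 \<le> t i" "ereal (t i) \<le> c"
    using alpha_pos toll_nonneg[of m] toll_nonneg[of i] toll_le_cap[of i] i by auto
  fix u assume u: "0 \<le> u" "ereal u \<le> c" "\<bar>u - t i\<bar> \<le> min (flow t i) (flow t m)"
  define s where "s = t(i := u)"
  have "0 \<le> \<alpha> + t m - t k" if "k < m" for k
    using linear_flow[OF that] linear_link_used[OF that] by simp
  then have "linear_demand s (\<alpha> + s m) = (\<Sum>k<m. flow t k + (if k = i then t i - u else 0))"
    unfolding linear_demand_def
    using i u linear_flow by (intro sum.cong) (auto simp: s_def)
  also have "\<dots> = (\<Sum>k<m. flow t k) + (t i - u)"
    using i by (simp add: sum.distrib)
  also have "\<dots> \<le> 1"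
    using wardrop_flow[of t] u(3) by (simp add: wardrop_def feasible_Suc_iff abs_le_iff)
  finally have "flow s = level_flow s (\<alpha> + s m)"
    by (rule flow_top_level)
  then have "flow s i = \<alpha> + t m - u"
    using i u linear_flow[OF i] by (simp add: level_flow_def s_def abs_le_iff)
  then show "u * (\<alpha> + t m - u) \<le> t i * (\<alpha> + t m - t i)"
    using no_profitable_deviation[of i u] linear_flow[OF i] u i by (simp add: s_def)
qed

lemma linear_tolls_eq:
  assumes "i < m"
  shows "t i = t 0"
proof -
  have le: "t j \<le> t k"
    if "2 * t j \<le> \<alpha> + t m" "2 * t k = \<alpha> + t m \<or> ereal (t k) = c" "ereal (t j) \<le> c" for j k
    using that(2)
  proof
    assume "ereal (t k) = c"
    then show ?thesis using that(3) by (metis ereal_less_eq(3))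
  qed (use that(1) in simp)
  have "0 < m" using assms by simp
  note resp_i = linear_toll_response[OF assms] and resp_0 = linear_toll_response[OF \<open>0 < m\<close>]
  have "ereal (t i) \<le> c" "ereal (t 0) \<le> c"
    using toll_le_cap assms by auto
  then show ?thesis
    using le[of i 0] le[of 0 i] resp_i resp_0 by (simp add: antisym)
qed

lemma constant_toll_response:
  "2 * t m \<le> \<alpha> + t 0 \<and> (2 * t m = \<alpha> + t 0 \<or> ereal (t m) = c)"
proof -
  define \<tau> where "\<tau> = t 0"
  have linear_toll: "t k = \<tau>" if "k < m" for k
    using linear_tolls_eq[OF that] by (simp add: \<tau>_def)
  have linear: "flow t k = \<alpha> + t m - \<tau>" if "k < m" for k
    using linear_flow[OF that] linear_toll[OF that] by simp
  have "flow t m = 1 - real m * (\<alpha> + t m - \<tau>)"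
    using wardrop_flow[of t] linear by (simp add: wardrop_def feasible_Suc_iff)
  then have flow_m: "flow t m = real m * (\<alpha> + \<tau> - t m)"
    using m_mult_alpha by (simp add: algebra_simps)
  have "0 < \<alpha> + t m - \<tau>"
    using linear[of 0] linear_link_used[of 0] linear_links_exist by simp
  moreover have "0 < \<alpha> + \<tau> - t m"
    using constant_link_used flow_m by (simp add: zero_less_mult_iff)
  ultimately have "2 * t m \<le> \<alpha> + \<tau> \<and> (2 * t m = \<alpha> + \<tau> \<or> ereal (t m) = c)"
  proof (intro capped_quadratic_best_response)
    show "0 \<le> \<alpha> + \<tau>" "0 \<le> t m" "ereal (t m) \<le> c"
      using alpha_pos toll_nonneg[of 0] toll_nonneg[of m] toll_le_cap[of m] by (auto simp: \<tau>_def)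
    fix u assume u: "0 \<le> u" "ereal u \<le> c" "\<bar>u - t m\<bar> \<le> min (\<alpha> + t m - \<tau>) (\<alpha> + \<tau> - t m)"
    have "flow (t(m := u)) m = real m * (\<alpha> + \<tau> - u)"
      using flow_constant_link[of "t(m := u)" \<tau>] u linear_toll by (auto simp: abs_le_iff)
    moreover have "u * flow (t(m := u)) m \<le> t m * flow t m"
      using no_profitable_deviation[of m u] u by simp
    ultimately have "real m * (u * (\<alpha> + \<tau> - u)) \<le> real m * (t m * (\<alpha> + \<tau> - t m))"
      using flow_m by (simp add: mult.left_commute[of _ "real m"])
    then show "u * (\<alpha> + \<tau> - u) \<le> t m * (\<alpha> + \<tau> - t m)"
      using linear_links_exist by simp
  qed (simp add: \<open>0 < \<alpha> + t m - \<tau>\<close>)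
  then show ?thesis by (simp add: \<tau>_def)
qed

lemma tolls_eq:
  assumes "i < Suc m"
  shows "t i = t m"
proof -
  have le: "x \<le> y"
    if "2 * x \<le> \<alpha> + y" "2 * y = \<alpha> + x \<or> ereal y = c" "ereal x \<le> c" for x y
    using that(2)
  proof
    assume "ereal y = c"
    then show ?thesis using that(3) by (metis ereal_less_eq(3))
  qed (use that(1) in simp)
  have "ereal (t 0) \<le> c" "ereal (t m) \<le> c"
    using toll_le_cap by auto
  then have "t 0 = t m"
    using le[of "t 0" "t m"] le[of "t m" "t 0"] constant_toll_response
      linear_toll_response[of 0] linear_links_exist
    by (simp add: antisym)
  then show ?thesis
    using linear_tolls_eq[of i] assms by (auto simp: less_Suc_eq)
qed

end

context pigou_network
begin

lemma toll_equilibrium_uniform: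
  assumes "t \<in> toll_eq (Suc m) lat c" and "0 \<le> c"
  shows "\<forall>i<Suc m. t i = t m"
proof (cases "c = 0")
  case True
  then have "\<forall>i<Suc m. t i = 0"
    using assms(1) by (auto simp: toll_eq_def zero_ereal_def intro: antisym)
  then show ?thesis by simp
next
  case False
  then interpret pigou_toll_equilibrium m c t
    using assms by unfold_locales auto
  show ?thesis using tolls_eq by blast
qed

lemma toll_equilibrium_flow:
  assumes "t \<in> toll_eq (Suc m) lat c" and "0 \<le> c"
  shows "flow t = uniform_toll_flow"
  using flow_uniform_toll toll_equilibrium_uniform[OF assms] by blast

lemma zero_toll_equilibrium: "(\<lambda>_. 0) \<in> toll_eq (Suc m) lat 0"
proof -
  have "(\<lambda>_. 0 :: real)(i := u) = (\<lambda>_. 0)" if "0 \<le> u" "ereal u \<le> 0" for i u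
    using that by (auto simp: zero_ereal_def)
  then show ?thesis by (auto simp: toll_eq_def zero_ereal_def profit_def)
qed

lemma toll_equilibrium_cost_ratio:
  "(\<Union>c\<in>{c. 0 \<le> c}. {cost (Suc m) lat (flow t) / cost (Suc m) lat optimal_flow
     | t. t \<in> toll_eq (Suc m) lat c}) = {8 / 7}"
proof -
  have "cost (Suc m) lat (flow t) / cost (Suc m) lat optimal_flow = 8 / 7"
    if "t \<in> toll_eq (Suc m) lat c" "0 \<le> c" for t c
    using toll_equilibrium_flow[OF that] alpha_pos
    by (simp add: cost_uniform_toll_flow cost_optimal_flow)
  then show ?thesis
    using zero_toll_equilibrium by fastforce
qed

end

theorem mainTheorem14:
  fixes n :: nat
  assumes "n \<ge> 2"
  shows "(\<forall>c::ereal. c \<ge> 0 \<longrightarrow> (\<forall>t \<in> toll_eq n (ex_lat n) c.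
            eqflow n (ex_lat n) t = eqflow n (ex_lat n) (\<lambda>_. 0)))
       \<and> eqflow n (ex_lat n) (\<lambda>_. 0) =
           (\<lambda>i. if i < n - 1 then 1 / (2 * (real n - 1)) else if i = n - 1 then 1/2 else 0)
       \<and> (\<forall>y. optimal n (ex_lat n) y \<longleftrightarrow>
           y = (\<lambda>i. if i < n - 1 then 1 / (4 * (real n - 1)) else if i = n - 1 then 3/4 else 0))
       \<and> (\<Union>c\<in>{c::ereal. c \<ge> 0}. {cost n (ex_lat n) (eqflow n (ex_lat n) t)
              / cost n (ex_lat n) (\<lambda>i. if i < n - 1 then 1 / (4 * (real n - 1)) else if i = n - 1 then 3/4 else 0)
              | t. t \<in> toll_eq n (ex_lat n) c}) = {8/7}"
proof -
  obtain m where n: "n = Suc m" and "1 \<le> m"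
    using assms by (cases n) auto
  interpret pigou_network m
    by unfold_locales fact
  have "(\<lambda>i. if i < n - 1 then 1 / (2 * (real n - 1)) else if i = n - 1 then 1/2 else 0)
      = uniform_toll_flow"
   and "(\<lambda>i. if i < n - 1 then 1 / (4 * (real n - 1)) else if i = n - 1 then 3/4 else 0)
      = optimal_flow"
    by (auto simp: n uniform_toll_flow_def optimal_flow_def \<alpha>_def)
  moreover have "flow (\<lambda>_. 0) = uniform_toll_flow"
    using flow_uniform_toll[of "\<lambda>_. 0" 0] by simp
  ultimately show ?thesis
    using toll_equilibrium_flow optimal_iff toll_equilibrium_cost_ratio by (simp add: n)
qed

end
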